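(* Fix $m\ge1$ and $i_1,\dots,i_m\in\{1,\dots,n\}$. For every integer $k\ge0$ and $r\in\{0,1\}$, $$\operatorname{ad}(X)^{2k+r}\big([x^m;i_1,\dots,i_m]\big)=(-1)^k\,k!\,\Big(\tfrac{\sqrt{-1}}{\sqrt2}\Big)^r\sum_{t=0}^{k}[\eta^tx^{m-k-t-r}\gamma^r\partial^{k-t};i_1,\dotsc,i_m],$$ where $[x^m;i_1,\dots,i_m]=x^{i_1}\cdots x^{i_m}$.
   Context: Fix $n\ge1$ and an invertible complex matrix $\eta=(\eta^{ij})$ with $\eta^{ij}=\eta^{ji}$. $W(2n|n)$ is the associative superalgebra generated by even $x^1,\dots,x^n,\partial_1,\dots,\partial_n$ and odd $\gamma^1,\dots,\gamma^n$ with relations $x^ix^j=x^jx^i$, $\partial_i\partial_j=\partial_j\partial_i$, $\partial_ix^j-x^j\partial_i=\delta_i^j$, $\gamma^i$ commuting with all $x^j,\partial_j$, $\gamma^i\gamma^j+\gamma^j\gamma^i=2\eta^{ij}$; $\partial^i:=\eta^{ij}\partial_j$ (summed). $X=\frac{\sqrt{-1}}{\sqrt2}\gamma^i\partial_i$, $\operatorname{ad}(X)(b)=Xb-(-1)^{|b|}bX$. Bracket symbol: for integers $a,p,q,t$ with $a,q,t\ge0$ and $2a+p+q+t=m$, and indices $i_1,\dots,i_m$, if $p<0$ the symbol $[\eta^ax^p\gamma^q\partial^t;i_1,\dots,i_m]$ is $0$; otherwise, for $\sigma\in S_m$ put $T_\sigma:=\prod_{l=0}^{a-1}\eta^{i_{\sigma(2l+1)}i_{\sigma(2l+2)}}\cdot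 x^{i_{\sigma(2a+1)}}\cdots x^{i_{\sigma(2a+p)}}\cdot\gamma^{i_{\sigma(2a+p+1)}}\cdots\gamma^{i_{\sigma(2a+p+q)}}\cdot\partial^{i_{\sigma(2a+p+q+1)}}\cdots\partial^{i_{\sigma(m)}}$ and $[\eta^ax^p\gamma^q\partial^t;i_1,\dots,i_m]:=\frac1{2^aa!p!t!}\sum_{\sigma\in S_m}T_\sigma$ (factors with exponent $0$ omitted). *)

theory Defs
  imports Complex_Main "HOL-Library.Function_Algebras" "HOL-Combinatorics.Permutations"
begin

text \<open>Free associative algebra on the generators x^i, partial_i, gamma^i, realised as
  complex-valued functions on words (noncommutative polynomials); W(2n|n) ids its
  quotient by the two-sided ideal generated by the defining relations.\<close>

datatype gen = GX nat | GD nat | GG nat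

type_synonym fa = "gen list \<Rightarrow> complex"

definition mono :: "gen list \<Rightarrow> fa" where
  "mono w = (\<lambda>u. if u = w then 1 else 0)"

definition fmul :: "fa \<Rightarrow> fa \<Rightarrow> fa" where
  "fmul f g = (\<lambda>w. \<Sum>i\<le>length w. f (take i w) * g (drop i w))"

definition fscale :: "complex \<Rightarrow> fa \<Rightarrow> fa" where
  "fscale c f = (\<lambda>w. c * f w)"

fun fprod :: "fa list \<Rightarrow> fa" where
  "fprod [] = mono []"
| "fprod (e # es) = fmul e (fprod es)"

definition isG :: "gen \<Rightarrow> bool" where
  "isG g = (case g of GG _ \<Rightarrow> True | _ \<Rightarrow> False)"

text \<open>Parity (grading) automorphism: b_even - b_odd.\<close>
definition psign :: "fa \<Rightarrow> fa" where
  "psign f = (\<lambda>w. (-1) ^ length (filter isG w) * f w)"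

definition relators :: "nat \<Rightarrow> (nat \<Rightarrow> nat \<Rightarrow> complex) \<Rightarrow> fa set" where
  "relators n eta =
     {mono [GX i, GX j] - mono [GX j, GX i] | i j. i \<in> {1..n} \<and> j \<in> {1..n}}
   \<union> {mono [GD i, GD j] - mono [GD j, GD i] | i j. i \<in> {1..n} \<and> j \<in> {1..n}}
   \<union> {mono [GD i, GX j] - mono [GX j, GD i] - (if i = j then mono [] else 0)
        | i j. i \<in> {1..n} \<and> j \<in> {1..n}}
   \<union> {mono [GG i, GX j] - mono [GX j, GG i] | i j. i \<in> {1..n} \<and> j \<in> {1..n}}
   \<union> {mono [GG i, GD j] - mono [GD j, GG i] | i j. i \<in> {1..n} \<and> j \<in> {1..n}}
   \<union> {mono [GG i, GG j] + mono [GG j, GG i] - fscale (2 * eta i j) (mono [])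
        | i j. i \<in> {1..n} \<and> j \<in> {1..n}}"

inductive_set Wideal :: "nat \<Rightarrow> (nat \<Rightarrow> nat \<Rightarrow> complex) \<Rightarrow> fa set"
  for n eta where
  zero: "0 \<in> Wideal n eta"
| gen: "r \<in> relators n eta \<Longrightarrow> fmul (mono u) (fmul r (mono v)) \<in> Wideal n eta"
| add: "a \<in> Wideal n eta \<Longrightarrow> b \<in> Wideal n eta \<Longrightarrow> a + b \<in> Wideal n eta"
| scale: "a \<in> Wideal n eta \<Longrightarrow> fscale c a \<in> Wideal n eta"

definition Weq :: "nat \<Rightarrow> (nat \<Rightarrow> nat \<Rightarrow> complex) \<Rightarrow> fa \<Rightarrow> fa \<Rightarrow> bool" where
  "Weq n eta a b \<longleftrightarrow> a - b \<in> Wideal n eta"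

definition cX :: complex where "cX = \<i> / complex_of_real (sqrt 2)"

definition Xel :: "nat \<Rightarrow> fa" where
  "Xel n = fscale cX (\<Sum>i\<in>{1..n}. mono [GG i, GD i])"

definition adX :: "nat \<Rightarrow> fa \<Rightarrow> fa" where
  "adX n b = fmul (Xel n) b - fmul (psign b) (Xel n)"

definition dup :: "nat \<Rightarrow> (nat \<Rightarrow> nat \<Rightarrow> complex) \<Rightarrow> nat \<Rightarrow> fa" where
  "dup n eta i = (\<Sum>j\<in>{1..n}. fscale (eta i j) (mono [GD j]))"

text \<open>Bracket symbol [eta^a x^p gamma^q partial^t; ids], positions 0-based, m = length ids.\<close>
definition bracket :: "nat \<Rightarrow> (nat \<Rightarrow> nat \<Rightarrow> complex) \<Rightarrow> nat \<Rightarrow> int \<Rightarrow> nat \<Rightarrow> nat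
     \<Rightarrow> nat list \<Rightarrow> fa" where
  "bracket n eta a p q t ids =
     (if p < 0 then 0 else
      (let m = length ids; pp = nat p in
       fscale (1 / (2 ^ a * fact a * fact pp * fact t))
         (\<Sum>\<sigma>\<in>{\<sigma>. \<sigma> permutes {..<m}}.
            fscale (\<Prod>l<a. eta (ids ! \<sigma> (2*l)) (ids ! \<sigma> (2*l+1)))
              (fprod (map (\<lambda>l. mono [GX (ids ! \<sigma> l)]) [2*a..<2*a+pp]
                    @ map (\<lambda>l. mono [GG (ids ! \<sigma> l)]) [2*a+pp..<2*a+pp+q]
                    @ map (\<lambda>l. dup n eta (ids ! \<sigma> l)) [2*a+pp+q..<m])))))"

end

theory Submission
  imports Defs
begin

text \<open>
  W(2n|n) is the free algebra on the letters \<open>x\<^sup>i, \<partial>\<^sub>i, \<gamma>\<^sup>i\<close> modulo the ideal of the defining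
  relations. Since ad(X) is an odd derivation of the free algebra and X is a finite
  combination of words, ad(X) preserves that ideal, so everything can be computed on words
  modulo relations. There \<open>ad(X) x\<^sup>i = c \<gamma>\<^sup>i\<close>, \<open>ad(X) \<gamma>\<^sup>i = 2c \<partial>\<^sup>i\<close> and \<open>ad(X) \<partial>\<^sup>i = 0\<close>, with
  \<open>c = \<surd>-1/\<surd>2\<close>. On a normalised bracket \<open>[\<eta>\<^sup>a x\<^sup>p \<gamma>\<^sup>q \<partial>\<^sup>t]\<close> this gives, for \<open>q = 0\<close>,
  \<open>c [\<eta>\<^sup>a x\<^sup>p\<^sup>-\<^sup>1 \<gamma> \<partial>\<^sup>t]\<close>: each \<open>x\<close> in turn becomes a \<open>\<gamma>\<close>, which is moved into the \<open>\<gamma>\<close>-slot because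
  the \<open>x\<close>'s commute. For \<open>q = 1\<close> the old \<open>\<gamma>\<close> contributes \<open>2c (t+1) [\<eta>\<^sup>a x\<^sup>p \<partial>\<^sup>t\<^sup>+\<^sup>1]\<close>, while each
  \<open>x\<close> produces a second \<open>\<gamma>\<close>; averaging over the transposition that exchanges the two
  \<open>\<gamma>\<close>-positions leaves only half their anticommutator \<open>\<eta>\<^sup>i\<^sup>j\<close>, which contributes
  \<open>2c (a+1) [\<eta>\<^sup>a\<^sup>+\<^sup>1 x\<^sup>p\<^sup>-\<^sup>1 \<partial>\<^sup>t]\<close>. Starting from \<open>[x\<^sup>m] = x\<^sup>i\<^sup>1\<cdots>x\<^sup>i\<^sup>m\<close> and alternating the two
  rules, the formula follows by induction on \<open>k\<close>: the weights \<open>k+1-t\<close> and \<open>t\<close> of the two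
  contributions add up to \<open>k+1\<close>, and \<open>c\<^sup>2 = -1/2\<close> supplies the sign.
\<close>

section \<open>Arithmetic of the free algebra\<close>

lemma fmul_add_left: "fmul (f + g) h = fmul f h + fmul g h"
  by (auto simp: fmul_def fun_eq_iff algebra_simps sum.distrib)

lemma fmul_add_right: "fmul h (f + g) = fmul h f + fmul h g"
  by (auto simp: fmul_def fun_eq_iff algebra_simps sum.distrib)

lemma fmul_diff_left: "fmul (f - g) h = fmul f h - fmul g h"
  by (auto simp: fmul_def fun_eq_iff algebra_simps sum_subtractf)

lemma fmul_diff_right: "fmul h (f - g) = fmul h f - fmul h g"
  by (auto simp: fmul_def fun_eq_iff algebra_simps sum_subtractf)

lemma fmul_uminus_left: "fmul (- f) g = - fmul f g"
  by (auto simp: fmul_def fun_eq_iff sum_negf)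

lemma fmul_zero_left [simp]: "fmul 0 h = 0"
  by (auto simp: fmul_def fun_eq_iff)

lemma fmul_zero_right [simp]: "fmul h 0 = 0"
  by (auto simp: fmul_def fun_eq_iff)

lemma fmul_scale_left: "fmul (fscale c f) h = fscale c (fmul f h)"
  by (auto simp: fmul_def fscale_def fun_eq_iff algebra_simps sum_distrib_left)

lemma fmul_scale_right: "fmul h (fscale c f) = fscale c (fmul h f)"
  by (auto simp: fmul_def fscale_def fun_eq_iff algebra_simps sum_distrib_left)

lemma fmul_sum_left: "fmul (\<Sum>i\<in>I. f i) h = (\<Sum>i\<in>I. fmul (f i) h)"
  using sum_comp_morphism[of "\<lambda>a. fmul a h" f I] by (simp add: fmul_add_left o_def)

lemma fmul_sum_right: "fmul h (\<Sum>i\<in>I. f i) = (\<Sum>i\<in>I. fmul h (f i))"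
  using sum_comp_morphism[of "fmul h" f I] by (simp add: fmul_add_right o_def)

lemma fscale_add: "fscale c (f + g) = fscale c f + fscale c g"
  by (auto simp: fscale_def fun_eq_iff algebra_simps)

lemma fscale_diff: "fscale c (f - g) = fscale c f - fscale c g"
  by (auto simp: fscale_def fun_eq_iff algebra_simps)

lemma fscale_uminus: "fscale c (- f) = - fscale c f"
  by (auto simp: fscale_def fun_eq_iff)

lemma fscale_zero [simp]: "fscale c 0 = 0" "fscale 0 f = 0"
  by (auto simp: fscale_def fun_eq_iff)

lemma fscale_one [simp]: "fscale 1 f = f"
  by (auto simp: fscale_def fun_eq_iff)

lemma fscale_fscale [simp]: "fscale c (fscale d f) = fscale (c * d) f"
  by (auto simp: fscale_def fun_eq_iff)

lemma fscale_minus_one: "fscale (-1) f = - f"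
  by (auto simp: fscale_def fun_eq_iff)

lemma fscale_sum: "fscale c (\<Sum>i\<in>I. f i) = (\<Sum>i\<in>I. fscale c (f i))"
  using sum_comp_morphism[of "fscale c" f I] by (simp add: fscale_add o_def)

lemma sum_const_fscale: "(\<Sum>x\<in>S. (f::fa)) = fscale (of_nat (card S)) f"
  by (simp add: fscale_def fun_eq_iff)

lemma fmul_mono: "fmul (mono u) (mono v) = mono (u @ v)"
proof
  fix w
  show "fmul (mono u) (mono v) w = mono (u @ v) w"
  proof (cases "w = u @ v")
    case True
    have "(\<Sum>i\<le>length w. mono u (take i w) * mono v (drop i w))
        = (\<Sum>i\<in>{length u}. mono u (take i w) * mono v (drop i w))"
    proof (rule sum.mono_neutral_right)
      show "\<forall>i\<in>{..length w} - {length u}. mono u (take i w) * mono v (drop i w) = 0"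
      proof
        fix i assume "i \<in> {..length w} - {length u}"
        then have "length (take i w) \<noteq> length u" by (auto simp: True)
        then show "mono u (take i w) * mono v (drop i w) = 0" by (auto simp: mono_def)
      qed
    qed (auto simp: True)
    then show ?thesis by (simp add: fmul_def True mono_def)
  next
    case False
    then have "mono u (take i w) * mono v (drop i w) = 0" for i
      by (auto simp: mono_def)
    with False show ?thesis by (simp add: fmul_def mono_def del: mult_eq_0_iff)
  qed
qed

lemma fmul_one_left [simp]: "fmul (mono []) f = f"
proof
  fix w
  have "(\<Sum>i\<le>length w. mono [] (take i w) * f (drop i w))
      = (\<Sum>i\<in>{0}. mono [] (take i w) * f (drop i w))"
    by (rule sum.mono_neutral_right) (auto simp: mono_def)
  then show "fmul (mono []) f w = f w" by (simp add: fmul_def mono_def)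
qed

lemma fmul_one_right [simp]: "fmul f (mono []) = f"
proof
  fix w
  have "(\<Sum>i\<le>length w. f (take i w) * mono [] (drop i w))
      = (\<Sum>i\<in>{length w}. f (take i w) * mono [] (drop i w))"
    by (rule sum.mono_neutral_right) (auto simp: mono_def)
  then show "fmul f (mono []) w = f w" by (simp add: fmul_def mono_def)
qed

lemma fmul_assoc: "fmul (fmul f g) h = fmul f (fmul g h)"
proof
  fix w :: "gen list"
  let ?N = "length w"
  have "fmul (fmul f g) h w
      = (\<Sum>i\<le>?N. \<Sum>j\<le>i. f (take j w) * g (take (i - j) (drop j w)) * h (drop i w))"
    by (auto simp: fmul_def sum_distrib_right min_def take_drop intro!: sum.cong)
  also have "\<dots> = (\<Sum>(j, l)\<in>{(j, l). j + l \<le> ?N}.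
      f (take j w) * g (take l (drop j w)) * h (drop (j + l) w))"
    by (subst sum.triangle_reindex_eq) (auto intro!: sum.cong)
  also have "\<dots> = (\<Sum>j\<le>?N. \<Sum>l\<le>?N - j. f (take j w) * g (take l (drop j w)) * h (drop (j + l) w))"
  proof -
    have "{(j, l). j + l \<le> ?N} = Sigma {..?N} (\<lambda>j. {..?N - j})" by auto
    then show ?thesis by (simp add: sum.Sigma)
  qed
  also have "\<dots> = fmul f (fmul g h) w"
    by (auto simp: fmul_def sum_distrib_left mult.assoc add.commute intro!: sum.cong)
  finally show "fmul (fmul f g) h w = fmul f (fmul g h) w" .
qed

lemma fprod_append: "fprod (xs @ ys) = fmul (fprod xs) (fprod ys)"
  by (induction xs) (auto simp: fmul_assoc)


definition finite_supp :: "fa \<Rightarrow> bool" where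
  "finite_supp f \<longleftrightarrow> finite {w. f w \<noteq> 0}"

lemma finite_supp_zero [simp]: "finite_supp 0"
  by (simp add: finite_supp_def)

lemma finite_supp_mono [simp]: "finite_supp (mono w)"
  by (simp add: finite_supp_def mono_def)

lemma finite_supp_add [simp]: "finite_supp f \<Longrightarrow> finite_supp g \<Longrightarrow> finite_supp (f + g)"
  unfolding finite_supp_def by (rule finite_subset[of _ "{w. f w \<noteq> 0} \<union> {w. g w \<noteq> 0}"]) auto

lemma finite_supp_diff [simp]: "finite_supp f \<Longrightarrow> finite_supp g \<Longrightarrow> finite_supp (f - g)"
  unfolding finite_supp_def by (rule finite_subset[of _ "{w. f w \<noteq> 0} \<union> {w. g w \<noteq> 0}"]) auto

lemma finite_supp_fscale [simp]: "finite_supp f \<Longrightarrow> finite_supp (fscale c f)"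
  unfolding finite_supp_def fscale_def by (rule finite_subset[of _ "{w. f w \<noteq> 0}"]) auto

lemma finite_supp_sum [simp]: "(\<And>i. i \<in> I \<Longrightarrow> finite_supp (f i)) \<Longrightarrow> finite_supp (\<Sum>i\<in>I. f i)"
  by (induction I rule: infinite_finite_induct) auto

lemma finite_supp_fmul [simp]:
  assumes "finite_supp f" "finite_supp g"
  shows "finite_supp (fmul f g)"
proof -
  let ?S = "(\<lambda>(u, v). u @ v) ` ({w. f w \<noteq> 0} \<times> {w. g w \<noteq> 0})"
  have "{w. fmul f g w \<noteq> 0} \<subseteq> ?S"
  proof
    fix w assume "w \<in> {w. fmul f g w \<noteq> 0}"
    then have "(\<Sum>i\<le>length w. f (take i w) * g (drop i w)) \<noteq> 0"
      by (simp add: fmul_def)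
    then obtain i where "f (take i w) * g (drop i w) \<noteq> 0"
      by (meson sum.not_neutral_contains_not_neutral)
    then show "w \<in> ?S"
      by (intro image_eqI[where x = "(take i w, drop i w)"]) auto
  qed
  moreover have "finite ?S"
    using assms by (simp add: finite_supp_def)
  ultimately show ?thesis
    unfolding finite_supp_def by (rule finite_subset)
qed

lemma finite_supp_fprod [simp]: "(\<And>e. e \<in> set es \<Longrightarrow> finite_supp e) \<Longrightarrow> finite_supp (fprod es)"
  by (induction es) auto

lemma finite_supp_psign [simp]: "finite_supp f \<Longrightarrow> finite_supp (psign f)"
  unfolding finite_supp_def psign_def by (rule finite_subset[of _ "{w. f w \<noteq> 0}"]) auto

lemma finite_supp_dup [simp]: "finite_supp (dup n eta i)"
  by (simp add: dup_def)

lemma finite_supp_Xel [simp]: "finite_supp (Xel n)"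
  by (simp add: Xel_def)

lemma finite_supp_expansion:
  assumes "finite_supp f"
  shows "f = (\<Sum>w\<in>{w. f w \<noteq> 0}. fscale (f w) (mono w))"
proof
  fix u
  have fin: "finite {w. f w \<noteq> 0}"
    using assms by (simp add: finite_supp_def)
  have "(\<Sum>w\<in>{w. f w \<noteq> 0}. fscale (f w) (mono w)) u = (\<Sum>w\<in>{w. f w \<noteq> 0}. fscale (f w) (mono w) u)"
    using sum_comp_morphism[of "\<lambda>a. a u" "\<lambda>w. fscale (f w) (mono w)"] by (simp add: o_def)
  also have "\<dots> = (\<Sum>w\<in>{w. f w \<noteq> 0} \<inter> {u}. f w)"
    using fin by (intro sum.mono_neutral_cong_right) (auto simp: fscale_def mono_def)
  also have "\<dots> = f u"
    by (cases "f u = 0") auto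
  finally show "f u = (\<Sum>w\<in>{w. f w \<noteq> 0}. fscale (f w) (mono w)) u" ..
qed


section \<open>The ideal of relations\<close>

lemma Wideal_sum: "(\<And>i. i \<in> I \<Longrightarrow> f i \<in> Wideal n eta) \<Longrightarrow> (\<Sum>i\<in>I. f i) \<in> Wideal n eta"
  by (induction I rule: infinite_finite_induct) (auto intro: Wideal.intros)

lemma Wideal_uminus: "a \<in> Wideal n eta \<Longrightarrow> - a \<in> Wideal n eta"
  using Wideal.scale[of a n eta "-1"] by (simp add: fscale_minus_one)

lemma Wideal_diff: "a \<in> Wideal n eta \<Longrightarrow> b \<in> Wideal n eta \<Longrightarrow> a - b \<in> Wideal n eta"
  using Wideal.add[OF _ Wideal_uminus] by (simp only: diff_conv_add_uminus)

lemma Wideal_fmul_mono_left: "a \<in> Wideal n eta \<Longrightarrow> fmul (mono u) a \<in> Wideal n eta"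
proof (induction rule: Wideal.induct)
  case (gen r u' v)
  then show ?case
    using Wideal.gen[of r n eta "u @ u'" v] by (simp add: fmul_assoc[symmetric] fmul_mono)
next
  case (add a b)
  show ?case unfolding fmul_add_right by (rule Wideal.add[OF add.IH])
next
  case (scale a c)
  show ?case unfolding fmul_scale_right by (rule Wideal.scale[OF scale.IH])
qed (unfold fmul_zero_right, rule Wideal.zero)

lemma Wideal_fmul_mono_right: "a \<in> Wideal n eta \<Longrightarrow> fmul a (mono v) \<in> Wideal n eta"
proof (induction rule: Wideal.induct)
  case (gen r u v')
  then show ?case
    using Wideal.gen[of r n eta u "v' @ v"] by (simp add: fmul_assoc fmul_mono)
next
  case (add a b)
  show ?case unfolding fmul_add_left by (rule Wideal.add[OF add.IH])
next
  case (scale a c)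
  show ?case unfolding fmul_scale_left by (rule Wideal.scale[OF scale.IH])
qed (unfold fmul_zero_left, rule Wideal.zero)

text \<open>Only finitely supported multipliers keep us inside the ideal, which consists of
  finite linear combinations.\<close>

lemma Wideal_fmul_left:
  assumes "finite_supp f" "a \<in> Wideal n eta"
  shows "fmul f a \<in> Wideal n eta"
proof -
  have "fmul f a = (\<Sum>w\<in>{w. f w \<noteq> 0}. fscale (f w) (fmul (mono w) a))"
    by (subst finite_supp_expansion[OF assms(1)]) (simp only: fmul_sum_left fmul_scale_left)
  then show ?thesis
    using assms(2) by (auto intro!: Wideal_sum Wideal.scale Wideal_fmul_mono_left)
qed

lemma Wideal_fmul_right:
  assumes "finite_supp f" "a \<in> Wideal n eta"
  shows "fmul a f \<in> Wideal n eta"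
proof -
  have "fmul a f = (\<Sum>w\<in>{w. f w \<noteq> 0}. fscale (f w) (fmul a (mono w)))"
    by (subst finite_supp_expansion[OF assms(1)]) (simp only: fmul_sum_right fmul_scale_right)
  then show ?thesis
    using assms(2) by (auto intro!: Wideal_sum Wideal.scale Wideal_fmul_mono_right)
qed

lemma psign_add: "psign (a + b) = psign a + psign b"
  by (auto simp: psign_def fun_eq_iff algebra_simps)

lemma psign_diff: "psign (a - b) = psign a - psign b"
  by (auto simp: psign_def fun_eq_iff algebra_simps)

lemma psign_zero [simp]: "psign 0 = 0"
  by (auto simp: psign_def fun_eq_iff)

lemma psign_fscale: "psign (fscale c a) = fscale c (psign a)"
  by (auto simp: psign_def fscale_def fun_eq_iff)

lemma psign_sum: "psign (\<Sum>i\<in>I. f i) = (\<Sum>i\<in>I. psign (f i))"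
  using sum_comp_morphism[of psign f I] by (simp add: psign_add o_def)

lemma psign_fmul: "psign (fmul a b) = fmul (psign a) (psign b)"
proof
  fix w :: "gen list"
  have "(-1::complex) ^ length (filter isG w)
      = (-1) ^ length (filter isG (take i w)) * (-1) ^ length (filter isG (drop i w))" for i
    by (metis append_take_drop_id filter_append length_append power_add)
  then show "psign (fmul a b) w = fmul (psign a) (psign b) w"
    by (auto simp: psign_def fmul_def sum_distrib_left intro!: sum.cong)
qed

lemma psign_mono: "psign (mono w) = fscale ((-1) ^ length (filter isG w)) (mono w)"
  by (auto simp: psign_def fscale_def mono_def fun_eq_iff)

lemma psign_relator: "r \<in> relators n eta \<Longrightarrow> psign r = r \<or> psign r = - r"
  unfolding relators_def
  by (elim UnE CollectE exE conjE)
     (simp_all add: psign_diff psign_add psign_mono psign_fscale isG_def fscale_minus_one)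

lemma Wideal_psign: "a \<in> Wideal n eta \<Longrightarrow> psign a \<in> Wideal n eta"
proof (induction rule: Wideal.induct)
  case (gen r u v)
  define s where "s = (-1::complex) ^ length (filter isG u) * (-1) ^ length (filter isG v)"
  have "psign (fmul (mono u) (fmul r (mono v))) = fscale s (fmul (mono u) (fmul (psign r) (mono v)))"
    by (simp add: psign_fmul psign_mono s_def fmul_scale_left fmul_scale_right mult.commute)
  moreover have "fmul (mono u) (fmul (- r) (mono v)) = fscale (-1) (fmul (mono u) (fmul r (mono v)))"
    by (simp add: fscale_minus_one[symmetric] fmul_scale_left fmul_scale_right)
  ultimately show ?case
    using psign_relator[OF gen] by (auto intro!: Wideal.scale Wideal.gen[OF gen])
next
  case (add a b)
  show ?case unfolding psign_add by (rule Wideal.add[OF add.IH])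
next
  case (scale a c)
  show ?case unfolding psign_fscale by (rule Wideal.scale[OF scale.IH])
qed (unfold psign_zero, rule Wideal.zero)

lemma adX_add: "adX n (a + b) = adX n a + adX n b"
  by (simp add: adX_def fmul_add_left fmul_add_right psign_add)

lemma adX_diff: "adX n (a - b) = adX n a - adX n b"
  by (simp add: adX_def fmul_diff_left fmul_diff_right psign_diff)

lemma adX_zero [simp]: "adX n 0 = 0"
  by (simp add: adX_def)

lemma adX_fscale: "adX n (fscale c a) = fscale c (adX n a)"
  by (simp add: adX_def fmul_scale_left fmul_scale_right psign_fscale fscale_diff)

lemma adX_sum: "adX n (\<Sum>i\<in>I. f i) = (\<Sum>i\<in>I. adX n (f i))"
  using sum_comp_morphism[of "adX n" f I] by (simp add: adX_add o_def)

lemma adX_fmul: "adX n (fmul a b) = fmul (adX n a) b + fmul (psign a) (adX n b)"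
  by (simp add: adX_def fmul_diff_left fmul_diff_right psign_fmul fmul_assoc)

lemma Wideal_adX: "a \<in> Wideal n eta \<Longrightarrow> adX n a \<in> Wideal n eta"
  unfolding adX_def by (intro Wideal_diff Wideal_fmul_left Wideal_fmul_right Wideal_psign finite_supp_Xel)


lemma Weq_refl [simp]: "Weq n eta a a"
  by (simp add: Weq_def Wideal.zero)

lemma Weq_sym: "Weq n eta a b \<Longrightarrow> Weq n eta b a"
  using Wideal_uminus[of "a - b" n eta] by (simp add: Weq_def)

lemma Weq_trans [trans]: "Weq n eta a b \<Longrightarrow> Weq n eta b c \<Longrightarrow> Weq n eta a c"
  using Wideal.add[of "a - b" n eta "b - c"] by (simp add: Weq_def)

lemma Weq_eq_trans [trans]: "a = b \<Longrightarrow> Weq n eta b c \<Longrightarrow> Weq n eta a c"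
  by simp

lemma Weq_add: "Weq n eta a b \<Longrightarrow> Weq n eta c d \<Longrightarrow> Weq n eta (a + c) (b + d)"
  using Wideal.add[of "a - b" n eta "c - d"] by (simp add: Weq_def add_diff_add)

lemma Weq_diff: "Weq n eta a b \<Longrightarrow> Weq n eta c d \<Longrightarrow> Weq n eta (a - c) (b - d)"
proof -
  have "(a - c) - (b - d) = (a - b) - (c - d)" by (simp add: algebra_simps)
  then show "Weq n eta a b \<Longrightarrow> Weq n eta c d \<Longrightarrow> Weq n eta (a - c) (b - d)"
    unfolding Weq_def by (metis Wideal_diff)
qed

lemma Weq_fscale: "Weq n eta a b \<Longrightarrow> Weq n eta (fscale c a) (fscale c b)"
  unfolding Weq_def fscale_diff[symmetric] by (rule Wideal.scale)

lemma Weq_sum: "(\<And>i. i \<in> I \<Longrightarrow> Weq n eta (f i) (g i)) \<Longrightarrow> Weq n eta (\<Sum>i\<in>I. f i) (\<Sum>i\<in>I. g i)"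
  unfolding Weq_def sum_subtractf[symmetric] by (rule Wideal_sum)

lemma Weq_fmul_left: "finite_supp f \<Longrightarrow> Weq n eta a b \<Longrightarrow> Weq n eta (fmul f a) (fmul f b)"
  unfolding Weq_def fmul_diff_right[symmetric] by (rule Wideal_fmul_left)

lemma Weq_fmul_right: "finite_supp f \<Longrightarrow> Weq n eta a b \<Longrightarrow> Weq n eta (fmul a f) (fmul b f)"
  unfolding Weq_def fmul_diff_left[symmetric] by (rule Wideal_fmul_right)

lemma Weq_adX: "Weq n eta a b \<Longrightarrow> Weq n eta (adX n a) (adX n b)"
  unfolding Weq_def adX_diff[symmetric] by (rule Wideal_adX)

lemma Weq_relator: "r \<in> relators n eta \<Longrightarrow> r = a - b \<Longrightarrow> Weq n eta a b"
  unfolding Weq_def using Wideal.gen[of r n eta "[]" "[]"] by simp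


section \<open>The defining relations and ad(X) on generators\<close>

lemma GX_GX_commute: "i \<in> {1..n} \<Longrightarrow> j \<in> {1..n} \<Longrightarrow> Weq n eta (mono [GX i, GX j]) (mono [GX j, GX i])"
  by (intro Weq_relator[where r = "mono [GX i, GX j] - mono [GX j, GX i]"] refl)
     (unfold relators_def, blast)

lemma GD_GD_commute: "i \<in> {1..n} \<Longrightarrow> j \<in> {1..n} \<Longrightarrow> Weq n eta (mono [GD i, GD j]) (mono [GD j, GD i])"
  by (intro Weq_relator[where r = "mono [GD i, GD j] - mono [GD j, GD i]"] refl)
     (unfold relators_def, blast)

lemma GG_GX_commute: "i \<in> {1..n} \<Longrightarrow> j \<in> {1..n} \<Longrightarrow> Weq n eta (mono [GG i, GX j]) (mono [GX j, GG i])"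
  by (intro Weq_relator[where r = "mono [GG i, GX j] - mono [GX j, GG i]"] refl)
     (unfold relators_def, blast)

lemma GG_GD_commute: "i \<in> {1..n} \<Longrightarrow> j \<in> {1..n} \<Longrightarrow> Weq n eta (mono [GG i, GD j]) (mono [GD j, GG i])"
  by (intro Weq_relator[where r = "mono [GG i, GD j] - mono [GD j, GG i]"] refl)
     (unfold relators_def, blast)

lemma GD_GX_commutator:
  assumes "i \<in> {1..n}" "j \<in> {1..n}"
  shows "Weq n eta (mono [GD i, GX j]) (mono [GX j, GD i] + (if i = j then mono [] else 0))"
proof (rule Weq_relator)
  show "mono [GD i, GX j] - mono [GX j, GD i] - (if i = j then mono [] else 0) \<in> relators n eta"
    using assms unfolding relators_def by blast
qed (simp add: diff_diff_eq)

lemma GG_GG_anticommutator: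
  assumes "i \<in> {1..n}" "j \<in> {1..n}"
  shows "Weq n eta (mono [GG i, GG j] + mono [GG j, GG i]) (fscale (2 * eta i j) (mono []))"
proof (rule Weq_relator)
  show "mono [GG i, GG j] + mono [GG j, GG i] - fscale (2 * eta i j) (mono []) \<in> relators n eta"
    using assms unfolding relators_def by blast
qed simp

lemma Weq_in_context:
  "Weq n eta a b \<Longrightarrow> Weq n eta (fmul (mono u) (fmul a (mono v))) (fmul (mono u) (fmul b (mono v)))"
  by (intro Weq_fmul_left Weq_fmul_right) simp_all

lemma Weq_word_in_context:
  "Weq n eta (mono w) (mono w') \<Longrightarrow> Weq n eta (mono (u @ w @ v)) (mono (u @ w' @ v))"
  using Weq_in_context[of n eta "mono w" "mono w'" u v] by (simp add: fmul_mono)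

lemma adX_GX:
  assumes i: "i \<in> {1..n}"
  shows "Weq n eta (adX n (mono [GX i])) (fscale cX (mono [GG i]))"
proof -
  have summand: "Weq n eta (mono [GG j, GD j, GX i] - mono [GX i, GG j, GD j])
      (if j = i then mono [GG j] else 0)" if j: "j \<in> {1..n}" for j
  proof -
    have "Weq n eta (mono [GG j, GD j, GX i]) (mono [GG j, GX i, GD j] + (if j = i then mono [GG j] else 0))"
      using Weq_in_context[OF GD_GX_commutator[OF j i], where u = "[GG j]" and v = "[]"]
      by (cases "j = i") (simp_all add: fmul_mono fmul_add_left fmul_add_right)
    also have "Weq n eta \<dots> (mono [GX i, GG j, GD j] + (if j = i then mono [GG j] else 0))"
      using Weq_add[OF Weq_word_in_context[OF GG_GX_commute[OF j i], where u = "[]" and v = "[GD j]"] Weq_refl] by simp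
    finally have "Weq n eta (mono [GG j, GD j, GX i])
        (mono [GX i, GG j, GD j] + (if j = i then mono [GG j] else 0))" .
    from Weq_diff[OF this Weq_refl[of n eta "mono [GX i, GG j, GD j]"]] show ?thesis
      by simp
  qed
  have "adX n (mono [GX i]) = fscale cX (\<Sum>j\<in>{1..n}. mono [GG j, GD j, GX i] - mono [GX i, GG j, GD j])"
    by (simp add: adX_def Xel_def psign_mono isG_def fmul_scale_left fmul_scale_right
        fmul_sum_left fmul_sum_right fmul_mono sum_subtractf fscale_diff)
  also have "Weq n eta \<dots> (fscale cX (\<Sum>j\<in>{1..n}. if j = i then mono [GG j] else 0))"
    using summand by (intro Weq_fscale Weq_sum)
  finally show ?thesis
    using i by simp
qed

lemma adX_GG:
  assumes i: "i \<in> {1..n}" and sym: "\<forall>i\<in>{1..n}. \<forall>j\<in>{1..n}. eta i j = eta j i"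
  shows "Weq n eta (adX n (mono [GG i])) (fscale (2 * cX) (dup n eta i))"
proof -
  have summand: "Weq n eta (mono [GG j, GD j, GG i] + mono [GG i, GG j, GD j])
      (fscale (2 * eta i j) (mono [GD j]))" if j: "j \<in> {1..n}" for j
  proof -
    have "Weq n eta (mono [GG j, GD j, GG i]) (mono [GG j, GG i, GD j])"
      using Weq_sym[OF Weq_word_in_context[OF GG_GD_commute[OF i j], where u = "[GG j]" and v = "[]"]] by simp
    then have "Weq n eta (mono [GG j, GD j, GG i] + mono [GG i, GG j, GD j])
        (mono [GG j, GG i, GD j] + mono [GG i, GG j, GD j])"
      by (rule Weq_add) simp
    also have "Weq n eta \<dots> (fscale (2 * eta j i) (mono [GD j]))"
      using Weq_in_context[OF GG_GG_anticommutator[OF j i], where u = "[]" and v = "[GD j]"]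
      by (simp add: fmul_mono fmul_add_left fmul_add_right fmul_scale_left)
    finally show ?thesis
      using sym i j by simp
  qed
  have "adX n (mono [GG i]) = fscale cX (\<Sum>j\<in>{1..n}. mono [GG j, GD j, GG i] + mono [GG i, GG j, GD j])"
    by (simp add: adX_def Xel_def psign_mono isG_def fmul_scale_left fmul_scale_right fmul_sum_left
        fmul_sum_right fmul_mono sum.distrib fscale_add fscale_minus_one fmul_uminus_left fscale_uminus sum_negf)
  also have "Weq n eta \<dots> (fscale cX (\<Sum>j\<in>{1..n}. fscale (2 * eta i j) (mono [GD j])))"
    using summand by (intro Weq_fscale Weq_sum)
  also have "\<dots> = fscale (2 * cX) (dup n eta i)"
    by (simp add: dup_def fscale_sum mult.commute mult.left_commute)
  finally show ?thesis .
qed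

lemma adX_GD:
  assumes l: "l \<in> {1..n}"
  shows "Weq n eta (adX n (mono [GD l])) 0"
proof -
  have summand: "Weq n eta (mono [GG j, GD j, GD l] - mono [GD l, GG j, GD j]) 0"
    if j: "j \<in> {1..n}" for j
  proof -
    have "Weq n eta (mono [GD l, GG j, GD j]) (mono [GG j, GD l, GD j])"
      using Weq_sym[OF Weq_word_in_context[OF GG_GD_commute[OF j l], where u = "[]" and v = "[GD j]"]] by simp
    also have "Weq n eta \<dots> (mono [GG j, GD j, GD l])"
      using Weq_word_in_context[OF GD_GD_commute[OF l j], where u = "[GG j]" and v = "[]"] by simp
    finally have "Weq n eta (mono [GD l, GG j, GD j]) (mono [GG j, GD j, GD l])" .
    from Weq_diff[OF Weq_refl[of n eta "mono [GG j, GD j, GD l]"] this] show ?thesis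
      by simp
  qed
  have "adX n (mono [GD l]) = fscale cX (\<Sum>j\<in>{1..n}. mono [GG j, GD j, GD l] - mono [GD l, GG j, GD j])"
    by (simp add: adX_def Xel_def psign_mono isG_def fmul_scale_left fmul_scale_right
        fmul_sum_left fmul_sum_right fmul_mono sum_subtractf fscale_diff)
  also have "Weq n eta \<dots> (fscale cX (\<Sum>j\<in>{1..n}. 0))"
    using summand by (intro Weq_fscale Weq_sum)
  finally show ?thesis
    by simp
qed

lemma adX_dup:
  assumes "i \<in> {1..n}"
  shows "Weq n eta (adX n (dup n eta i)) 0"
proof -
  have "adX n (dup n eta i) = (\<Sum>l\<in>{1..n}. fscale (eta i l) (adX n (mono [GD l])))"
    by (simp add: dup_def adX_sum adX_fscale)
  also have "Weq n eta \<dots> (\<Sum>l\<in>{1..n}. fscale (eta i l) 0)"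
    using adX_GD by (intro Weq_sum Weq_fscale)
  finally show ?thesis
    by simp
qed


lemma fprod_map_GX: "fprod (map (\<lambda>l. mono [GX (f l)]) L) = mono (map GX (map f L))"
  by (induction L) (simp_all add: fmul_mono)

definition except_nth :: "nat \<Rightarrow> 'a list \<Rightarrow> 'a list" where
  "except_nth l xs = take l xs @ drop (Suc l) xs"

lemma except_nth_Cons_0 [simp]: "except_nth 0 (a # xs) = xs"
  by (simp add: except_nth_def)

lemma except_nth_Cons_Suc [simp]: "except_nth (Suc l) (a # xs) = a # except_nth l xs"
  by (simp add: except_nth_def)

definition dup_prod :: "nat \<Rightarrow> (nat \<Rightarrow> nat \<Rightarrow> complex) \<Rightarrow> nat list \<Rightarrow> fa" where
  "dup_prod n eta C = fprod (map (dup n eta) C)"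

lemma finite_supp_dup_prod [simp]: "finite_supp (dup_prod n eta C)"
  by (auto simp: dup_prod_def intro!: finite_supp_fprod)

lemma psign_dup [simp]: "psign (dup n eta i) = dup n eta i"
  by (simp add: dup_def psign_sum psign_fscale psign_mono isG_def)

lemma dup_prod_Cons: "dup_prod n eta (c # C) = fmul (dup n eta c) (dup_prod n eta C)"
  by (simp add: dup_prod_def)

lemma adX_dup_prod: "set C \<subseteq> {1..n} \<Longrightarrow> Weq n eta (adX n (dup_prod n eta C)) 0"
proof (induction C)
  case Nil
  then show ?case
    by (simp add: dup_prod_def adX_def psign_mono)
next
  case (Cons c C)
  have "Weq n eta (adX n (dup n eta c)) 0"
    using Cons.prems by (intro adX_dup) simp
  moreover have "Weq n eta (adX n (dup_prod n eta C)) 0"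
    by (rule Cons.IH) (use Cons.prems in simp)
  ultimately have "Weq n eta (adX n (dup_prod n eta (c # C)))
      (fmul 0 (dup_prod n eta C) + fmul (dup n eta c) 0)"
    unfolding dup_prod_Cons adX_fmul psign_dup
    by (intro Weq_add Weq_fmul_left Weq_fmul_right) simp_all
  then show ?case
    by (simp only: fmul_zero_left fmul_zero_right add_0)
qed

lemma adX_GG_dup_prod:
  assumes "i \<in> {1..n}" "set C \<subseteq> {1..n}" and sym: "\<forall>i\<in>{1..n}. \<forall>j\<in>{1..n}. eta i j = eta j i"
  shows "Weq n eta (adX n (fmul (mono [GG i]) (dup_prod n eta C)))
    (fscale (2 * cX) (fmul (dup n eta i) (dup_prod n eta C)))"
proof -
  have "Weq n eta (adX n (fmul (mono [GG i]) (dup_prod n eta C)))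
      (fmul (fscale (2 * cX) (dup n eta i)) (dup_prod n eta C) + fmul (psign (mono [GG i])) 0)"
    unfolding adX_fmul
    using adX_GG[OF assms(1) sym] adX_dup_prod[OF assms(2)]
    by (intro Weq_add Weq_fmul_left Weq_fmul_right) simp_all
  then show ?thesis
    by (simp add: fmul_scale_left)
qed

lemma Weq_letter_past_GX_word:
  assumes "\<forall>j\<in>set A. Weq n eta (mono [g, GX j]) (mono [GX j, g])"
  shows "Weq n eta (mono (u @ g # map GX A @ v)) (mono (u @ map GX A @ g # v))"
  using assms
proof (induction A arbitrary: u)
  case (Cons a A)
  have "Weq n eta (mono (u @ g # GX a # map GX A @ v)) (mono ((u @ [GX a]) @ g # map GX A @ v))"
    using Weq_word_in_context[of n eta "[g, GX a]" "[GX a, g]" u "map GX A @ v"] Cons.prems by simp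
  also have "Weq n eta (mono ((u @ [GX a]) @ g # map GX A @ v)) (mono ((u @ [GX a]) @ map GX A @ g # v))"
    using Cons.IH[of "u @ [GX a]"] Cons.prems by simp
  finally show ?case
    by simp
qed simp

lemma Weq_GX_word_perm:
  assumes "set A \<subseteq> {1..n}" "mset A = mset B"
  shows "Weq n eta (mono (map GX A)) (mono (map GX B))"
  using assms
proof (induction A arbitrary: B)
  case (Cons a A)
  from Cons.prems(2) have "a \<in> set B"
    by (metis list.set_intros(1) set_mset_mset)
  then obtain B1 B2 where B: "B = B1 @ a # B2"
    by (meson split_list)
  have a: "a \<in> {1..n}"
    using Cons.prems by simp
  have "set B \<subseteq> {1..n}"
    using Cons.prems by (metis set_mset_mset)
  then have "\<forall>j\<in>set B1. Weq n eta (mono [GX a, GX j]) (mono [GX j, GX a])"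
    using B by (auto intro!: GX_GX_commute[OF a])
  have "Weq n eta (mono (map GX A)) (mono (map GX (B1 @ B2)))"
    using Cons.prems B by (intro Cons.IH) simp_all
  then have "Weq n eta (mono (map GX (a # A))) (mono (GX a # map GX B1 @ map GX B2))"
    using Weq_word_in_context[where u = "[GX a]" and v = "[]"] by fastforce
  also have "Weq n eta \<dots> (mono (map GX B1 @ GX a # map GX B2))"
    using Weq_letter_past_GX_word[of B1 n eta "GX a" "[]" "map GX B2"]
      \<open>\<forall>j\<in>set B1. Weq n eta (mono [GX a, GX j]) (mono [GX j, GX a])\<close> by simp
  finally show ?case
    using B by simp
qed simp

lemma GG_GX_word_commute:
  assumes "i \<in> {1..n}" "set A \<subseteq> {1..n}"
  shows "Weq n eta (mono (GG i # map GX A)) (mono (map GX A @ [GG i]))"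
proof -
  have "\<forall>j\<in>set A. Weq n eta (mono [GG i, GX j]) (mono [GX j, GG i])"
    using assms by (auto intro!: GG_GX_commute[OF assms(1)])
  then show ?thesis
    using Weq_letter_past_GX_word[of A n eta "GG i" "[]" "[]"] by simp
qed

lemma adX_GX_word_fmul:
  assumes "set A \<subseteq> {1..n}" "finite_supp Y"
  shows "Weq n eta (adX n (fmul (mono (map GX A)) Y))
    ((\<Sum>l<length A. fscale cX (fmul (mono (map GX (except_nth l A) @ [GG (A ! l)])) Y))
      + fmul (mono (map GX A)) (adX n Y))"
  using assms(1)
proof (induction A)
  case Nil
  then show ?case
    by (simp add: adX_def psign_mono)
next
  case (Cons a A)
  let ?M = "mono (map GX A)"
  let ?T = "\<lambda>l. fscale cX (fmul (mono (map GX (except_nth l A) @ [GG (A ! l)])) Y)"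
  let ?R = "fmul (mono [GX a]) ((\<Sum>l<length A. ?T l) + fmul ?M (adX n Y))"
  have a: "a \<in> {1..n}" and A: "set A \<subseteq> {1..n}"
    using Cons.prems by auto
  have split: "mono (map GX (a # A)) = fmul (mono [GX a]) ?M"
    by (simp add: fmul_mono)
  have "adX n (fmul (mono (map GX (a # A))) Y)
      = fmul (adX n (mono [GX a])) (fmul ?M Y) + fmul (mono [GX a]) (adX n (fmul ?M Y))"
    by (simp only: split fmul_assoc) (simp add: adX_fmul psign_mono isG_def)
  also have "Weq n eta \<dots> (fmul (fscale cX (mono [GG a])) (fmul ?M Y) + ?R)"
    by (intro Weq_add Weq_fmul_left Weq_fmul_right adX_GX[OF a] Cons.IH[OF A])
       (simp_all add: assms(2))
  also have "fmul (fscale cX (mono [GG a])) (fmul ?M Y) = fscale cX (fmul (mono (GG a # map GX A)) Y)"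
    by (simp add: fmul_scale_left fmul_assoc[symmetric] fmul_mono)
  also have "Weq n eta (fscale cX (fmul (mono (GG a # map GX A)) Y) + ?R)
      (fscale cX (fmul (mono (map GX A @ [GG a])) Y) + ?R)"
    using GG_GX_word_commute[OF a A] assms(2) by (intro Weq_add Weq_fscale Weq_fmul_right Weq_refl)
  also have "fscale cX (fmul (mono (map GX A @ [GG a])) Y) + ?R
      = (\<Sum>l<length (a # A). fscale cX (fmul (mono (map GX (except_nth l (a # A)) @ [GG ((a # A) ! l)])) Y))
        + fmul (mono (map GX (a # A))) (adX n Y)"
    by (simp only: length_Cons sum.lessThan_Suc_shift)
       (simp add: fmul_add_right fmul_sum_right fmul_scale_right fmul_assoc[symmetric] fmul_mono
        del: sum.lessThan_Suc)
  finally show ?case .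
qed

lemma GG_GG_anticommutator_in_context:
  assumes "i \<in> {1..n}" "j \<in> {1..n}" "finite_supp P" "finite_supp Y"
  shows "Weq n eta (fmul P (fmul (mono [GG i, GG j]) Y) + fmul P (fmul (mono [GG j, GG i]) Y))
    (fscale (2 * eta i j) (fmul P Y))"
proof -
  have "Weq n eta (fmul P (fmul (mono [GG i, GG j] + mono [GG j, GG i]) Y))
      (fmul P (fmul (fscale (2 * eta i j) (mono [])) Y))"
    using GG_GG_anticommutator[OF assms(1,2)] assms(3,4) by (intro Weq_fmul_left Weq_fmul_right) simp_all
  then show ?thesis
    by (simp add: fmul_add_left fmul_add_right fmul_scale_left fmul_scale_right)
qed


section \<open>Symmetrised words\<close>

text \<open>The bracket symbol without its normalising factor; the number of \<open>\<partial>\<close>'s is implicitly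
  \<open>length ids - 2 a - p - q\<close>.\<close>

definition eta_weight :: "(nat \<Rightarrow> nat \<Rightarrow> complex) \<Rightarrow> nat list \<Rightarrow> (nat \<Rightarrow> nat) \<Rightarrow> nat \<Rightarrow> complex" where
  "eta_weight eta ids \<sigma> a = (\<Prod>l<a. eta (ids ! \<sigma> (2*l)) (ids ! \<sigma> (2*l+1)))"

definition bracket_word ::
    "nat \<Rightarrow> (nat \<Rightarrow> nat \<Rightarrow> complex) \<Rightarrow> nat list \<Rightarrow> (nat \<Rightarrow> nat) \<Rightarrow> nat \<Rightarrow> nat \<Rightarrow> nat \<Rightarrow> fa" where
  "bracket_word n eta ids \<sigma> a p q = fprod (map (\<lambda>l. mono [GX (ids ! \<sigma> l)]) [2*a..<2*a+p]
      @ map (\<lambda>l. mono [GG (ids ! \<sigma> l)]) [2*a+p..<2*a+p+q]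
      @ map (\<lambda>l. dup n eta (ids ! \<sigma> l)) [2*a+p+q..<length ids])"

definition bracket_sum :: "nat \<Rightarrow> (nat \<Rightarrow> nat \<Rightarrow> complex) \<Rightarrow> nat list \<Rightarrow> nat \<Rightarrow> nat \<Rightarrow> nat \<Rightarrow> fa" where
  "bracket_sum n eta ids a p q = (\<Sum>\<sigma>\<in>{\<sigma>. \<sigma> permutes {..<length ids}}.
      fscale (eta_weight eta ids \<sigma> a) (bracket_word n eta ids \<sigma> a p q))"

lemma bracket_eq_bracket_sum:
  "bracket n eta a (int p) q t ids = fscale (1 / (2 ^ a * fact a * fact p * fact t)) (bracket_sum n eta ids a p q)"
  by (simp add: bracket_def bracket_sum_def bracket_word_def eta_weight_def Let_def)

lemma bracket_neg: "p < 0 \<Longrightarrow> bracket n eta a p q t ids = 0"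
  by (simp add: bracket_def)

lemma bracket_word_x_dup:
  "bracket_word n eta ids \<sigma> a p 0
    = fmul (mono (map GX (map (\<lambda>s. ids ! \<sigma> s) [2*a..<2*a+p])))
        (dup_prod n eta (map (\<lambda>s. ids ! \<sigma> s) [2*a+p..<length ids]))"
  by (simp add: bracket_word_def fprod_append dup_prod_def fprod_map_GX o_def)

lemma bracket_word_x_gamma_dup:
  "bracket_word n eta ids \<sigma> a p 1
    = fmul (mono (map GX (map (\<lambda>s. ids ! \<sigma> s) [2*a..<2*a+p])))
        (fmul (mono [GG (ids ! \<sigma> (2*a+p))]) (dup_prod n eta (map (\<lambda>s. ids ! \<sigma> s) [2*a+p+1..<length ids])))"
  by (simp add: bracket_word_def fprod_append dup_prod_def fprod_map_GX o_def)

lemma permuted_ids_in_range: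
  "set ids \<subseteq> {1..n} \<Longrightarrow> \<sigma> permutes {..<length ids} \<Longrightarrow> s < length ids \<Longrightarrow> ids ! \<sigma> s \<in> {1..n}"
  by (meson lessThan_iff nth_mem permutes_in_image subsetD)

lemma eta_weight_compose_fixing:
  "(\<And>s. s < 2 * a \<Longrightarrow> \<tau> s = s) \<Longrightarrow> eta_weight eta ids (\<sigma> \<circ> \<tau>) a = eta_weight eta ids \<sigma> a"
  unfolding eta_weight_def by (intro prod.cong) auto

lemma except_nth_map: "except_nth l (map f xs) = map f (except_nth l xs)"
  by (simp add: except_nth_def take_map drop_map)

lemma except_nth_upt:
  fixes lo l p :: nat
  shows "l < p \<Longrightarrow> except_nth l [lo..<lo+p] = [lo..<lo+l] @ [Suc (lo+l)..<lo+p]"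
  by (simp add: except_nth_def take_upt drop_upt)

lemma mset_eq_except_nth_upt:
  fixes lo l p :: nat
  assumes "distinct xs" "set xs = {lo..<lo+p} - {lo+l}" "l < p"
  shows "mset xs = mset (except_nth l [lo..<lo+p])"
proof (rule set_eq_iff_mset_eq_distinct[THEN iffD1])
  note split = except_nth_upt[OF assms(3), of lo]
  then show "distinct (except_nth l [lo..<lo+p])"
    by simp
  show "set xs = set (except_nth l [lo..<lo+p])"
    using assms(3) unfolding split assms(2) by auto
qed fact

lemma transpose_image_out: "a \<notin> S \<Longrightarrow> b \<in> S \<Longrightarrow> transpose a b ` S = insert a (S - {b})"
  by (auto simp: transpose_def image_iff split: if_splits)

lemma mset_transpose_to_last:
  fixes lo l p :: nat
  assumes "l < p"
  shows "mset (map (transpose (lo+l) (lo+p-1)) [lo..<lo+p-1]) = mset (except_nth l [lo..<lo+p])"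
proof (rule mset_eq_except_nth_upt[OF _ _ assms])
  show "distinct (map (transpose (lo+l) (lo+p-1)) [lo..<lo+p-1])"
    by (simp add: distinct_map inj_on_subset[OF inj_transpose])
  show "set (map (transpose (lo+l) (lo+p-1)) [lo..<lo+p-1]) = {lo..<lo+p} - {lo+l}"
  proof (cases "l = p - 1")
    case True
    with assms have "p = Suc l"
      by simp
    then show ?thesis
      by auto
  next
    case False
    have "set (map (transpose (lo+l) (lo+p-1)) [lo..<lo+p-1]) = transpose (lo+p-1) (lo+l) ` {lo..<lo+p-1}"
      by (simp only: set_map set_upt) (subst transpose_commute, rule refl)
    also have "\<dots> = insert (lo+p-1) ({lo..<lo+p-1} - {lo+l})"
      using False assms by (intro transpose_image_out) auto
    also have "\<dots> = {lo..<lo+p} - {lo+l}"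
      using False assms by auto
    finally show ?thesis .
  qed
qed

lemma mset_transpose_to_front:
  fixes lo l p :: nat
  assumes "l < p"
  shows "mset (map (transpose lo (lo+l) \<circ> transpose (lo+1) (lo+p)) [lo+2..<lo+p+1])
    = mset (except_nth l [lo..<lo+p])"
proof (rule mset_eq_except_nth_upt[OF _ _ assms])
  show "distinct (map (transpose lo (lo+l) \<circ> transpose (lo+1) (lo+p)) [lo+2..<lo+p+1])"
    by (simp add: distinct_map inj_on_subset[OF inj_compose[OF inj_transpose inj_transpose]])
  have inner: "transpose (lo+1) (lo+p) ` {lo+2..<lo+p+1} = {lo+1..<lo+p}"
  proof (cases "p = 1")
    case False
    then have "transpose (lo+1) (lo+p) ` {lo+2..<lo+p+1} = insert (lo+1) ({lo+2..<lo+p+1} - {lo+p})"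
      using assms by (intro transpose_image_out) auto
    also have "\<dots> = {lo+1..<lo+p}"
      using False assms by auto
    finally show ?thesis .
  qed simp
  have outer: "transpose lo (lo+l) ` {lo+1..<lo+p} = {lo..<lo+p} - {lo+l}"
  proof (cases "l = 0")
    case False
    then have "transpose lo (lo+l) ` {lo+1..<lo+p} = insert lo ({lo+1..<lo+p} - {lo+l})"
      using assms by (intro transpose_image_out) auto
    also have "\<dots> = {lo..<lo+p} - {lo+l}"
      using False assms by auto
    finally show ?thesis .
  qed auto
  show "set (map (transpose lo (lo+l) \<circ> transpose (lo+1) (lo+p)) [lo+2..<lo+p+1])
      = {lo..<lo+p} - {lo+l}"
    by (simp only: set_map set_upt image_comp[symmetric] inner outer)
qed


section \<open>ad(X) on symmetrised words\<close>

lemma set_except_nth_subset: "set (except_nth l xs) \<subseteq> set xs"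
  by (auto simp: except_nth_def dest: in_set_takeD in_set_dropD)

lemma permuted_ids_upt_in_range:
  "set ids \<subseteq> {1..n} \<Longrightarrow> \<sigma> permutes {..<length ids} \<Longrightarrow> hi \<le> length ids
    \<Longrightarrow> set (map (\<lambda>s. ids ! \<sigma> s) [lo..<hi]) \<subseteq> {1..n}"
  by (auto intro: permuted_ids_in_range)

lemma bracket_sum_compose_right:
  assumes "\<tau> permutes {..<length ids}" "\<And>s. s < 2 * a \<Longrightarrow> \<tau> s = s"
  shows "(\<Sum>\<sigma>\<in>{\<sigma>. \<sigma> permutes {..<length ids}}.
      fscale (eta_weight eta ids \<sigma> a) (bracket_word n eta ids (\<sigma> \<circ> \<tau>) a p q))
    = bracket_sum n eta ids a p q"
  unfolding bracket_sum_def
  by (subst sum_permutations_compose_right[OF assms(1)]) (simp add: eta_weight_compose_fixing[OF assms(2)])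

lemma Weq_bracket_word_moved_gamma:
  assumes ids: "set ids \<subseteq> {1..n}" and \<sigma>: "\<sigma> permutes {..<length ids}"
    and l: "l < p" and le: "2 * a + p \<le> length ids"
  defines "A \<equiv> map (\<lambda>s. ids ! \<sigma> s) [2*a..<2*a+p]"
    and "C \<equiv> map (\<lambda>s. ids ! \<sigma> s) [2*a+p..<length ids]"
    and "\<tau> \<equiv> transpose (2*a+l) (2*a+p-1)"
  shows "Weq n eta (fmul (mono (map GX (except_nth l A) @ [GG (A ! l)])) (dup_prod n eta C))
    (bracket_word n eta ids (\<sigma> \<circ> \<tau>) a (p - 1) 1)"
proof -
  let ?B = "map (\<lambda>s. ids ! \<sigma> (\<tau> s)) [2*a..<2*a+p-1]"
  have "map (\<lambda>s. ids ! \<sigma> (\<tau> s)) [2*a+p..<length ids] = C"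
    unfolding C_def \<tau>_def using l by (intro map_cong) (auto simp: transpose_def)
  moreover have "\<tau> (2*a+p-1) = 2*a+l"
    by (simp add: \<tau>_def)
  moreover have "A ! l = ids ! \<sigma> (2*a+l)"
    using l by (simp add: A_def)
  moreover have "2*a+(p-1) = 2*a+p-1" "2*a+p-1+1 = 2*a+p"
    using l by auto
  ultimately have word: "bracket_word n eta ids (\<sigma> \<circ> \<tau>) a (p - 1) 1
      = fmul (mono (map GX ?B)) (fmul (mono [GG (A ! l)]) (dup_prod n eta C))"
    by (simp only: bracket_word_x_gamma_dup o_apply)
  have "mset (except_nth l A) = image_mset (\<lambda>s. ids ! \<sigma> s) (mset (except_nth l [2*a..<2*a+p]))"
    by (simp add: A_def except_nth_map)
  also have "\<dots> = image_mset (\<lambda>s. ids ! \<sigma> s) (mset (map \<tau> [2*a..<2*a+p-1]))"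
    by (simp only: \<tau>_def mset_transpose_to_last[OF l])
  also have "\<dots> = mset ?B"
    by (simp add: multiset.map_comp o_def)
  finally have "Weq n eta (mono (map GX (except_nth l A))) (mono (map GX ?B))"
    using set_except_nth_subset[of l A] permuted_ids_upt_in_range[OF ids \<sigma> le] A_def
    by (intro Weq_GX_word_perm) auto
  then show ?thesis
    unfolding word by (simp add: fmul_mono[symmetric] fmul_assoc Weq_fmul_right)
qed

lemma adX_bracket_word_x_dup:
  assumes ids: "set ids \<subseteq> {1..n}" and \<sigma>: "\<sigma> permutes {..<length ids}"
    and le: "2 * a + p \<le> length ids"
  shows "Weq n eta (adX n (bracket_word n eta ids \<sigma> a p 0))
    (\<Sum>l<p. fscale cX (bracket_word n eta ids (\<sigma> \<circ> transpose (2*a+l) (2*a+p-1)) a (p - 1) 1))"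
proof -
  let ?A = "map (\<lambda>s. ids ! \<sigma> s) [2*a..<2*a+p]"
  let ?C = "map (\<lambda>s. ids ! \<sigma> s) [2*a+p..<length ids]"
  have len: "length ?A = p"
    by simp
  have "Weq n eta (adX n (bracket_word n eta ids \<sigma> a p 0))
      ((\<Sum>l<p. fscale cX (fmul (mono (map GX (except_nth l ?A) @ [GG (?A ! l)])) (dup_prod n eta ?C)))
        + fmul (mono (map GX ?A)) (adX n (dup_prod n eta ?C)))"
    using adX_GX_word_fmul[OF permuted_ids_upt_in_range[OF ids \<sigma> le, where lo = "2*a"] finite_supp_dup_prod[of n eta ?C]]
    by (simp only: bracket_word_x_dup len)
  also have "Weq n eta \<dots> ((\<Sum>l<p. fscale cX (bracket_word n eta ids (\<sigma> \<circ> transpose (2*a+l) (2*a+p-1)) a (p - 1) 1))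
      + fmul (mono (map GX ?A)) 0)"
    by (intro Weq_add Weq_sum Weq_fscale Weq_fmul_left Weq_bracket_word_moved_gamma[OF ids \<sigma> _ le]
        adX_dup_prod permuted_ids_upt_in_range[OF ids \<sigma>]) simp_all
  finally show ?thesis
    by simp
qed

lemma adX_bracket_sum_x_dup:
  assumes ids: "set ids \<subseteq> {1..n}" and le: "2 * a + p \<le> length ids"
  shows "Weq n eta (adX n (bracket_sum n eta ids a p 0)) (fscale (cX * of_nat p) (bracket_sum n eta ids a (p - 1) 1))"
proof -
  let ?P = "{\<sigma>. \<sigma> permutes {..<length ids}}"
  let ?\<tau> = "\<lambda>l. transpose (2*a+l) (2*a+p-1)"
  have \<tau>: "?\<tau> l permutes {..<length ids}" "\<And>s. s < 2 * a \<Longrightarrow> ?\<tau> l s = s" if "l < p" for l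
    using that le by (auto intro!: permutes_swap_id)
  have "adX n (bracket_sum n eta ids a p 0)
      = (\<Sum>\<sigma>\<in>?P. fscale (eta_weight eta ids \<sigma> a) (adX n (bracket_word n eta ids \<sigma> a p 0)))"
    by (simp add: bracket_sum_def adX_sum adX_fscale)
  also have "Weq n eta \<dots> (\<Sum>\<sigma>\<in>?P. fscale (eta_weight eta ids \<sigma> a)
      (\<Sum>l<p. fscale cX (bracket_word n eta ids (\<sigma> \<circ> ?\<tau> l) a (p - 1) 1)))"
    using adX_bracket_word_x_dup[OF ids _ le] by (intro Weq_sum Weq_fscale) simp
  also have "\<dots> = fscale cX (\<Sum>l<p. \<Sum>\<sigma>\<in>?P. fscale (eta_weight eta ids \<sigma> a)
      (bracket_word n eta ids (\<sigma> \<circ> ?\<tau> l) a (p - 1) 1))"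
    by (simp add: fscale_sum mult.commute sum.swap[where A = ?P])
  also have "\<dots> = fscale cX (\<Sum>l<p. bracket_sum n eta ids a (p - 1) 1)"
    using bracket_sum_compose_right[OF \<tau>] by simp
  finally show ?thesis
    by (simp only: sum_const_fscale fscale_fscale card_lessThan)
qed

text \<open>The term of ad(X) applied to a word of shape \<open>x\<^sup>p \<gamma> \<partial>\<^sup>t\<close> in which the \<open>l\<close>-th \<open>x\<close> has
  turned into a \<open>\<gamma>\<close>.\<close>

definition gamma_pair_word ::
    "nat \<Rightarrow> (nat \<Rightarrow> nat \<Rightarrow> complex) \<Rightarrow> nat list \<Rightarrow> (nat \<Rightarrow> nat) \<Rightarrow> nat \<Rightarrow> nat \<Rightarrow> nat \<Rightarrow> fa" where
  "gamma_pair_word n eta ids \<sigma> a p l =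
    fmul (mono (map GX (except_nth l (map (\<lambda>s. ids ! \<sigma> s) [2*a..<2*a+p]))
                @ [GG (ids ! \<sigma> (2*a+l)), GG (ids ! \<sigma> (2*a+p))]))
      (dup_prod n eta (map (\<lambda>s. ids ! \<sigma> s) [2*a+p+1..<length ids]))"

lemma adX_bracket_word_x_gamma_dup:
  assumes ids: "set ids \<subseteq> {1..n}" and \<sigma>: "\<sigma> permutes {..<length ids}"
    and le: "2 * a + p + 1 \<le> length ids" and sym: "\<forall>i\<in>{1..n}. \<forall>j\<in>{1..n}. eta i j = eta j i"
  shows "Weq n eta (adX n (bracket_word n eta ids \<sigma> a p 1))
    ((\<Sum>l<p. fscale cX (gamma_pair_word n eta ids \<sigma> a p l)) + fscale (2 * cX) (bracket_word n eta ids \<sigma> a p 0))"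
proof -
  let ?A = "map (\<lambda>s. ids ! \<sigma> s) [2*a..<2*a+p]"
  let ?g = "ids ! \<sigma> (2*a+p)"
  let ?C = "map (\<lambda>s. ids ! \<sigma> s) [2*a+p+1..<length ids]"
  let ?D = "dup_prod n eta ?C"
  have len: "length ?A = p"
    by simp
  have g: "?g \<in> {1..n}" and C: "set ?C \<subseteq> {1..n}"
    using le permuted_ids_in_range[OF ids \<sigma>] permuted_ids_upt_in_range[OF ids \<sigma>] by simp_all
  have "Weq n eta (adX n (bracket_word n eta ids \<sigma> a p 1))
      ((\<Sum>l<p. fscale cX (fmul (mono (map GX (except_nth l ?A) @ [GG (?A ! l)])) (fmul (mono [GG ?g]) ?D)))
        + fmul (mono (map GX ?A)) (adX n (fmul (mono [GG ?g]) ?D)))"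
    using adX_GX_word_fmul[OF permuted_ids_upt_in_range[OF ids \<sigma>, where lo = "2*a" and hi = "2*a+p"],
        of "fmul (mono [GG ?g]) ?D"] le
    by (simp only: bracket_word_x_gamma_dup len) simp
  also have "Weq n eta \<dots> ((\<Sum>l<p. fscale cX (gamma_pair_word n eta ids \<sigma> a p l))
      + fmul (mono (map GX ?A)) (fscale (2 * cX) (fmul (dup n eta ?g) ?D)))"
    by (intro Weq_add Weq_fmul_left adX_GG_dup_prod[OF g C sym])
       (simp_all add: gamma_pair_word_def fmul_assoc[symmetric] fmul_mono)
  also have "fmul (mono (map GX ?A)) (fscale (2 * cX) (fmul (dup n eta ?g) ?D))
      = fscale (2 * cX) (bracket_word n eta ids \<sigma> a p 0)"
    using le by (simp add: bracket_word_x_dup upt_conv_Cons dup_prod_Cons fmul_scale_right)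
  finally show ?thesis .
qed

lemma gamma_pair_word_transposed:
  assumes l: "l < p"
  shows "gamma_pair_word n eta ids (\<sigma> \<circ> transpose (2*a+l) (2*a+p)) a p l
    = fmul (mono (map GX (except_nth l (map (\<lambda>s. ids ! \<sigma> s) [2*a..<2*a+p]))
                @ [GG (ids ! \<sigma> (2*a+p)), GG (ids ! \<sigma> (2*a+l))]))
        (dup_prod n eta (map (\<lambda>s. ids ! \<sigma> s) [2*a+p+1..<length ids]))"
proof -
  let ?sw = "transpose (2*a+l) (2*a+p)"
  have "except_nth l (map (\<lambda>s. ids ! \<sigma> (?sw s)) [2*a..<2*a+p])
      = except_nth l (map (\<lambda>s. ids ! \<sigma> s) [2*a..<2*a+p])"
    unfolding except_nth_map except_nth_upt[OF l] using l by (intro map_cong) (auto simp: transpose_def)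
  moreover have "map (\<lambda>s. ids ! \<sigma> (?sw s)) [2*a+p+1..<length ids] = map (\<lambda>s. ids ! \<sigma> s) [2*a+p+1..<length ids]"
    using l by (intro map_cong) (auto simp: transpose_def)
  ultimately show ?thesis
    by (simp only: gamma_pair_word_def o_apply transpose_apply_first transpose_apply_second)
qed

lemma Weq_gamma_pair_word_symmetrised:
  assumes ids: "set ids \<subseteq> {1..n}" and \<sigma>: "\<sigma> permutes {..<length ids}"
    and l: "l < p" and le: "2 * a + p + 1 \<le> length ids"
  shows "Weq n eta (gamma_pair_word n eta ids \<sigma> a p l + gamma_pair_word n eta ids (\<sigma> \<circ> transpose (2*a+l) (2*a+p)) a p l)
    (fscale (2 * eta (ids ! \<sigma> (2*a+l)) (ids ! \<sigma> (2*a+p)))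
      (fmul (mono (map GX (except_nth l (map (\<lambda>s. ids ! \<sigma> s) [2*a..<2*a+p]))))
        (dup_prod n eta (map (\<lambda>s. ids ! \<sigma> s) [2*a+p+1..<length ids]))))"
proof -
  let ?w = "map GX (except_nth l (map (\<lambda>s. ids ! \<sigma> s) [2*a..<2*a+p]))"
  let ?D = "dup_prod n eta (map (\<lambda>s. ids ! \<sigma> s) [2*a+p+1..<length ids])"
  have "ids ! \<sigma> (2*a+l) \<in> {1..n}" "ids ! \<sigma> (2*a+p) \<in> {1..n}"
    by (rule permuted_ids_in_range[OF ids \<sigma>], use l le in simp)+
  then have "Weq n eta (fmul (mono ?w) (fmul (mono [GG (ids ! \<sigma> (2*a+l)), GG (ids ! \<sigma> (2*a+p))]) ?D)
      + fmul (mono ?w) (fmul (mono [GG (ids ! \<sigma> (2*a+p)), GG (ids ! \<sigma> (2*a+l))]) ?D))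
    (fscale (2 * eta (ids ! \<sigma> (2*a+l)) (ids ! \<sigma> (2*a+p))) (fmul (mono ?w) ?D))"
    by (intro GG_GG_anticommutator_in_context) simp_all
  then show ?thesis
    unfolding gamma_pair_word_transposed[OF l] unfolding gamma_pair_word_def
    by (simp add: fmul_assoc[symmetric] fmul_mono)
qed

lemma Weq_contract_gamma_pair:
  assumes ids: "set ids \<subseteq> {1..n}" and \<sigma>: "\<sigma> permutes {..<length ids}"
    and l: "l < p" and le: "2 * a + p + 1 \<le> length ids"
  defines "\<tau> \<equiv> transpose (2*a) (2*a+l) \<circ> transpose (2*a+1) (2*a+p)"
  shows "Weq n eta
    (fscale (eta_weight eta ids \<sigma> a * eta (ids ! \<sigma> (2*a+l)) (ids ! \<sigma> (2*a+p)))
      (fmul (mono (map GX (except_nth l (map (\<lambda>s. ids ! \<sigma> s) [2*a..<2*a+p]))))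
        (dup_prod n eta (map (\<lambda>s. ids ! \<sigma> s) [2*a+p+1..<length ids]))))
    (fscale (eta_weight eta ids (\<sigma> \<circ> \<tau>) (a + 1)) (bracket_word n eta ids (\<sigma> \<circ> \<tau>) (a + 1) (p - 1) 0))"
proof -
  let ?A = "map (\<lambda>s. ids ! \<sigma> s) [2*a..<2*a+p]"
  let ?B = "map (\<lambda>s. ids ! \<sigma> (\<tau> s)) [2*a+2..<2*a+p+1]"
  let ?C = "map (\<lambda>s. ids ! \<sigma> s) [2*a+p+1..<length ids]"
  have fixes_low: "\<tau> s = s" if "s < 2 * a" for s
    using that by (auto simp: \<tau>_def transpose_def)
  have "\<tau> (2*a) = 2*a+l" "\<tau> (2*a+1) = 2*a+p"
    using l by (auto simp: \<tau>_def transpose_def)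
  then have weight: "eta_weight eta ids (\<sigma> \<circ> \<tau>) (a + 1)
      = eta_weight eta ids \<sigma> a * eta (ids ! \<sigma> (2*a+l)) (ids ! \<sigma> (2*a+p))"
    using eta_weight_compose_fixing[OF fixes_low, where eta = eta and ids = ids and \<sigma> = \<sigma>]
    by (simp add: eta_weight_def)
  have "map (\<lambda>s. ids ! \<sigma> (\<tau> s)) [2*a+p+1..<length ids] = ?C"
    using l by (intro map_cong) (auto simp: \<tau>_def transpose_def)
  moreover have "2*(a+1) = 2*a+2" "2*a+2+(p-1) = 2*a+p+1"
    using l by auto
  ultimately have word: "bracket_word n eta ids (\<sigma> \<circ> \<tau>) (a + 1) (p - 1) 0
      = fmul (mono (map GX ?B)) (dup_prod n eta ?C)"
    by (simp only: bracket_word_x_dup o_apply)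
  have "mset (except_nth l ?A) = image_mset (\<lambda>s. ids ! \<sigma> s) (mset (except_nth l [2*a..<2*a+p]))"
    by (simp add: except_nth_map)
  also have "\<dots> = image_mset (\<lambda>s. ids ! \<sigma> s) (mset (map \<tau> [2*a+2..<2*a+p+1]))"
    by (simp only: \<tau>_def mset_transpose_to_front[OF l])
  also have "\<dots> = mset ?B"
    by (simp add: multiset.map_comp o_def)
  finally have "Weq n eta (mono (map GX (except_nth l ?A))) (mono (map GX ?B))"
    using set_except_nth_subset[of l ?A] permuted_ids_upt_in_range[OF ids \<sigma>, where lo = "2*a" and hi = "2*a+p"] le
    by (intro Weq_GX_word_perm) auto
  then show ?thesis
    unfolding word weight by (intro Weq_fscale Weq_fmul_right) simp_all
qed

text \<open>Reindexing by the transposition of the two \<open>\<gamma>\<close>-positions averages each word with its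
  swap, so only the anticommutator of the two \<open>\<gamma>\<close>'s survives.\<close>

lemma Weq_gamma_pair_sum:
  assumes ids: "set ids \<subseteq> {1..n}" and l: "l < p" and le: "2 * a + p + 1 \<le> length ids"
  shows "Weq n eta (\<Sum>\<sigma>\<in>{\<sigma>. \<sigma> permutes {..<length ids}}.
      fscale (eta_weight eta ids \<sigma> a) (gamma_pair_word n eta ids \<sigma> a p l))
    (bracket_sum n eta ids (a + 1) (p - 1) 0)"
proof -
  let ?P = "{\<sigma>. \<sigma> permutes {..<length ids}}"
  let ?G = "\<lambda>\<sigma>. gamma_pair_word n eta ids \<sigma> a p l"
  let ?E = "\<lambda>\<sigma>. eta_weight eta ids \<sigma> a"
  let ?sw = "transpose (2*a+l) (2*a+p)"
  let ?\<tau> = "transpose (2*a) (2*a+l) \<circ> transpose (2*a+1) (2*a+p)"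
  have sw: "?sw permutes {..<length ids}"
    using l le by (intro permutes_swap_id) auto
  have \<tau>: "?\<tau> permutes {..<length ids}"
    using l le by (intro permutes_compose permutes_swap_id) auto
  have "(\<Sum>\<sigma>\<in>?P. fscale (?E \<sigma>) (?G (\<sigma> \<circ> ?sw))) = (\<Sum>\<sigma>\<in>?P. fscale (?E (\<sigma> \<circ> ?sw)) (?G (\<sigma> \<circ> ?sw)))"
    using l by (intro sum.cong refl) (auto simp: eta_weight_compose_fixing transpose_def)
  also have "\<dots> = (\<Sum>\<sigma>\<in>?P. fscale (?E \<sigma>) (?G \<sigma>))"
    by (rule sum_permutations_compose_right[OF sw, symmetric])
  finally have "(\<Sum>\<sigma>\<in>?P. fscale (?E \<sigma>) (?G \<sigma> + ?G (\<sigma> \<circ> ?sw)))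
      = fscale 2 (\<Sum>\<sigma>\<in>?P. fscale (?E \<sigma>) (?G \<sigma>))"
    by (simp only: fscale_add sum.distrib) (simp add: fscale_def fun_eq_iff)
  then have "(\<Sum>\<sigma>\<in>?P. fscale (?E \<sigma>) (?G \<sigma>))
      = fscale (1/2) (\<Sum>\<sigma>\<in>?P. fscale (?E \<sigma>) (?G \<sigma> + ?G (\<sigma> \<circ> ?sw)))"
    by simp
  also have "Weq n eta \<dots> (fscale (1/2) (\<Sum>\<sigma>\<in>?P. fscale (?E \<sigma>)
      (fscale (2 * eta (ids ! \<sigma> (2*a+l)) (ids ! \<sigma> (2*a+p)))
        (fmul (mono (map GX (except_nth l (map (\<lambda>s. ids ! \<sigma> s) [2*a..<2*a+p]))))
          (dup_prod n eta (map (\<lambda>s. ids ! \<sigma> s) [2*a+p+1..<length ids]))))))"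
    using Weq_gamma_pair_word_symmetrised[OF ids _ l le] by (intro Weq_fscale Weq_sum) simp
  also have "\<dots> = (\<Sum>\<sigma>\<in>?P. fscale (?E \<sigma> * eta (ids ! \<sigma> (2*a+l)) (ids ! \<sigma> (2*a+p)))
        (fmul (mono (map GX (except_nth l (map (\<lambda>s. ids ! \<sigma> s) [2*a..<2*a+p]))))
          (dup_prod n eta (map (\<lambda>s. ids ! \<sigma> s) [2*a+p+1..<length ids]))))"
    by (simp add: fscale_sum mult.commute mult.left_commute)
  also have "Weq n eta \<dots> (\<Sum>\<sigma>\<in>?P. fscale (eta_weight eta ids (\<sigma> \<circ> ?\<tau>) (a + 1))
      (bracket_word n eta ids (\<sigma> \<circ> ?\<tau>) (a + 1) (p - 1) 0))"
    using Weq_contract_gamma_pair[OF ids _ l le] by (intro Weq_sum) simp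
  also have "\<dots> = bracket_sum n eta ids (a + 1) (p - 1) 0"
    unfolding bracket_sum_def by (rule sum_permutations_compose_right[OF \<tau>, symmetric])
  finally show ?thesis .
qed

lemma adX_bracket_sum_x_gamma_dup:
  assumes ids: "set ids \<subseteq> {1..n}" and le: "2 * a + p + 1 \<le> length ids"
    and sym: "\<forall>i\<in>{1..n}. \<forall>j\<in>{1..n}. eta i j = eta j i"
  shows "Weq n eta (adX n (bracket_sum n eta ids a p 1))
    (fscale (2 * cX) (bracket_sum n eta ids a p 0) + fscale (cX * of_nat p) (bracket_sum n eta ids (a + 1) (p - 1) 0))"
proof -
  let ?P = "{\<sigma>. \<sigma> permutes {..<length ids}}"
  let ?E = "\<lambda>\<sigma>. eta_weight eta ids \<sigma> a"
  have "adX n (bracket_sum n eta ids a p 1) = (\<Sum>\<sigma>\<in>?P. fscale (?E \<sigma>) (adX n (bracket_word n eta ids \<sigma> a p 1)))"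
    by (simp add: bracket_sum_def adX_sum adX_fscale)
  also have "Weq n eta \<dots> (\<Sum>\<sigma>\<in>?P. fscale (?E \<sigma>) ((\<Sum>l<p. fscale cX (gamma_pair_word n eta ids \<sigma> a p l))
      + fscale (2 * cX) (bracket_word n eta ids \<sigma> a p 0)))"
    using adX_bracket_word_x_gamma_dup[OF ids _ le sym] by (intro Weq_sum Weq_fscale) simp
  also have "\<dots> = fscale cX (\<Sum>l<p. \<Sum>\<sigma>\<in>?P. fscale (?E \<sigma>) (gamma_pair_word n eta ids \<sigma> a p l))
      + fscale (2 * cX) (bracket_sum n eta ids a p 0)"
    by (simp add: bracket_sum_def fscale_add fscale_sum sum.distrib mult.commute sum.swap[where A = ?P])
  also have "Weq n eta \<dots> (fscale cX (\<Sum>l<p. bracket_sum n eta ids (a + 1) (p - 1) 0)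
      + fscale (2 * cX) (bracket_sum n eta ids a p 0))"
    using Weq_gamma_pair_sum[OF ids _ le] by (intro Weq_add Weq_fscale Weq_sum Weq_refl) simp
  finally show ?thesis
    by (simp only: sum_const_fscale fscale_fscale card_lessThan add.commute)
qed


section \<open>The recursion for bracket symbols\<close>

lemma cX_squared: "cX * cX = - 1 / 2"
  by (simp add: cX_def flip: of_real_mult)

lemma fscale_of_nat: "fscale (of_nat c) f = of_nat c * f"
  by (simp add: fscale_def fun_eq_iff)

lemma adX_bracket_x_dup:
  assumes ids: "set ids \<subseteq> {1..n}" and le: "2 * int a + p \<le> int (length ids)"
  shows "Weq n eta (adX n (bracket n eta a p 0 t ids)) (fscale cX (bracket n eta a (p - 1) 1 t ids))"
proof (cases "p < 0")
  case False
  then obtain q where q: "p = int q"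
    using zero_le_imp_eq_int[of p] by auto
  let ?N = "1 / (2 ^ a * fact a * fact q * fact t) :: complex"
  have "adX n (bracket n eta a p 0 t ids) = fscale ?N (adX n (bracket_sum n eta ids a q 0))"
    by (simp add: q bracket_eq_bracket_sum adX_fscale)
  also have "Weq n eta \<dots> (fscale ?N (fscale (cX * of_nat q) (bracket_sum n eta ids a (q - 1) 1)))"
    using le q by (intro Weq_fscale adX_bracket_sum_x_dup[OF ids]) simp
  also have "\<dots> = fscale cX (bracket n eta a (p - 1) 1 t ids)"
  proof (cases q)
    case (Suc q')
    then have "?N * (cX * of_nat q) = cX * (1 / (2 ^ a * fact a * fact q' * fact t))"
      by (simp add: fact_Suc divide_simps del: of_nat_Suc)
    moreover have "p - 1 = int q'"
      using q Suc by simp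
    ultimately show ?thesis
      by (simp add: bracket_eq_bracket_sum Suc)
  qed (simp add: q bracket_neg)
  finally show ?thesis .
qed (simp add: bracket_neg)

lemma adX_bracket_x_gamma_dup:
  assumes ids: "set ids \<subseteq> {1..n}" and le: "2 * int a + p + 1 \<le> int (length ids)"
    and sym: "\<forall>i\<in>{1..n}. \<forall>j\<in>{1..n}. eta i j = eta j i"
  shows "Weq n eta (adX n (bracket n eta a p 1 t ids))
    (fscale (2 * cX * of_nat (t + 1)) (bracket n eta a p 0 (t + 1) ids)
      + fscale (2 * cX * of_nat (a + 1)) (bracket n eta (a + 1) (p - 1) 0 t ids))"
proof (cases "p < 0")
  case False
  then obtain q where q: "p = int q"
    using zero_le_imp_eq_int[of p] by auto
  let ?N = "1 / (2 ^ a * fact a * fact q * fact t) :: complex"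
  have "adX n (bracket n eta a p 1 t ids) = fscale ?N (adX n (bracket_sum n eta ids a q 1))"
    by (simp add: q bracket_eq_bracket_sum adX_fscale)
  also have "Weq n eta \<dots> (fscale ?N (fscale (2 * cX) (bracket_sum n eta ids a q 0)
      + fscale (cX * of_nat q) (bracket_sum n eta ids (a + 1) (q - 1) 0)))"
    using le q by (intro Weq_fscale adX_bracket_sum_x_gamma_dup[OF ids _ sym]) simp
  also have "\<dots> = fscale (2 * cX * of_nat (t + 1)) (bracket n eta a p 0 (t + 1) ids)
      + fscale (2 * cX * of_nat (a + 1)) (bracket n eta (a + 1) (p - 1) 0 t ids)"
  proof -
    have gamma: "?N * (2 * cX) = 2 * cX * of_nat (t + 1) * (1 / (2 ^ a * fact a * fact q * fact (t + 1)))"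
      by (simp add: fact_Suc divide_simps del: of_nat_Suc)
    have pair: "fscale (?N * (cX * of_nat q)) (bracket_sum n eta ids (a + 1) (q - 1) 0)
        = fscale (2 * cX * of_nat (a + 1)) (bracket n eta (a + 1) (p - 1) 0 t ids)"
    proof (cases q)
      case (Suc q')
      then have "?N * (cX * of_nat q) = 2 * cX * of_nat (a + 1) * (1 / (2 ^ (a + 1) * fact (a + 1) * fact q' * fact t))"
        by (simp add: fact_Suc divide_simps del: of_nat_Suc)
      moreover have "p - 1 = int q'"
        using q Suc by simp
      ultimately show ?thesis
        by (simp add: bracket_eq_bracket_sum Suc)
    qed (simp add: q bracket_neg)
    show ?thesis
      using gamma pair by (simp add: fscale_add q bracket_eq_bracket_sum)
  qed
  finally show ?thesis .
qed (simp add: bracket_neg)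

lemma Weq_bracket_x_only:
  assumes ids: "set ids \<subseteq> {1..n}"
  shows "Weq n eta (bracket n eta 0 (int (length ids)) 0 0 ids) (mono (map GX ids))"
proof -
  let ?m = "length ids"
  let ?P = "{\<sigma>. \<sigma> permutes {..<?m}}"
  have "bracket n eta 0 (int ?m) 0 0 ids = fscale (1 / fact ?m) (\<Sum>\<sigma>\<in>?P. bracket_word n eta ids \<sigma> 0 ?m 0)"
    by (simp add: bracket_eq_bracket_sum bracket_sum_def eta_weight_def)
  also have "Weq n eta \<dots> (fscale (1 / fact ?m) (\<Sum>\<sigma>\<in>?P. mono (map GX ids)))"
  proof (intro Weq_fscale Weq_sum)
    fix \<sigma> assume "\<sigma> \<in> ?P"
    then have "mset (permute_list \<sigma> ids) = mset ids"
      by simp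
    then have "Weq n eta (mono (map GX (permute_list \<sigma> ids))) (mono (map GX ids))"
      using ids by (intro Weq_GX_word_perm) (auto dest: mset_eq_setD)
    then show "Weq n eta (bracket_word n eta ids \<sigma> 0 ?m 0) (mono (map GX ids))"
      by (simp add: bracket_word_x_dup dup_prod_def permute_list_def)
  qed
  also have "\<dots> = mono (map GX ids)"
    by (simp add: sum_const_fscale card_permutations del: sum_constant)
  finally show ?thesis .
qed

definition adX_closed_form :: "nat \<Rightarrow> (nat \<Rightarrow> nat \<Rightarrow> complex) \<Rightarrow> nat list \<Rightarrow> nat \<Rightarrow> nat \<Rightarrow> fa" where
  "adX_closed_form n eta ids k r = fscale ((-1) ^ k * fact k * cX ^ r)
     (\<Sum>t\<in>{0..k}. bracket n eta t (int (length ids) - int k - int t - int r) r (k - t) ids)"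

lemma adX_closed_form_even:
  assumes ids: "set ids \<subseteq> {1..n}"
  shows "Weq n eta (adX n (adX_closed_form n eta ids k 0)) (adX_closed_form n eta ids k 1)"
proof -
  let ?m = "int (length ids)"
  have "adX n (adX_closed_form n eta ids k 0) = fscale ((-1) ^ k * fact k)
      (\<Sum>t\<in>{0..k}. adX n (bracket n eta t (?m - int k - int t) 0 (k - t) ids))"
    by (simp add: adX_closed_form_def adX_fscale adX_sum)
  also have "Weq n eta \<dots> (fscale ((-1) ^ k * fact k)
      (\<Sum>t\<in>{0..k}. fscale cX (bracket n eta t (?m - int k - int t - 1) 1 (k - t) ids)))"
    by (intro Weq_fscale Weq_sum adX_bracket_x_dup[OF ids]) simp
  also have "\<dots> = adX_closed_form n eta ids k 1"
    by (simp add: adX_closed_form_def fscale_sum algebra_simps)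
  finally show ?thesis .
qed

lemma sum_telescoping_weights:
  fixes b :: "nat \<Rightarrow> 'a::comm_semiring_1"
  shows "(\<Sum>t\<le>k. of_nat (k + 1 - t) * b t) + (\<Sum>t\<le>k. of_nat (t + 1) * b (Suc t))
    = of_nat (k + 1) * (\<Sum>t\<le>Suc k. b t)"
proof -
  have "(\<Sum>t\<le>k. of_nat (k + 1 - t) * b t) = (\<Sum>t\<le>Suc k. of_nat (k + 1 - t) * b t)"
    by simp
  moreover have "(\<Sum>t\<le>k. of_nat (t + 1) * b (Suc t)) = (\<Sum>t\<le>Suc k. of_nat t * b t)"
    by (simp only: sum.atMost_Suc_shift) simp
  moreover have "(\<Sum>t\<le>Suc k. of_nat (k + 1 - t) * b t + of_nat t * b t) = (\<Sum>t\<le>Suc k. of_nat (k + 1) * b t)"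
    by (intro sum.cong refl) (simp flip: distrib_right of_nat_add)
  ultimately show ?thesis
    by (simp only: sum.distrib[symmetric] sum_distrib_left)
qed

lemma adX_bracket_odd_summand:
  assumes ids: "set ids \<subseteq> {1..n}" and sym: "\<forall>i\<in>{1..n}. \<forall>j\<in>{1..n}. eta i j = eta j i"
    and "t \<le> k"
  defines "b \<equiv> \<lambda>t. bracket n eta t (int (length ids) - int (Suc k) - int t) 0 (Suc k - t) ids"
  shows "Weq n eta (adX n (bracket n eta t (int (length ids) - int k - int t - 1) 1 (k - t) ids))
    (fscale (2 * cX) (of_nat (k + 1 - t) * b t + of_nat (t + 1) * b (Suc t)))"
proof -
  have "bracket n eta t (int (length ids) - int k - int t - 1) 0 (k - t + 1) ids = b t"
    "bracket n eta (t + 1) (int (length ids) - int k - int t - 1 - 1) 0 (k - t) ids = b (Suc t)"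
    using \<open>t \<le> k\<close> by (simp_all add: b_def Suc_diff_le algebra_simps)
  with adX_bracket_x_gamma_dup[OF ids _ sym, of t "int (length ids) - int k - int t - 1" "k - t"] \<open>t \<le> k\<close>
  have "Weq n eta (adX n (bracket n eta t (int (length ids) - int k - int t - 1) 1 (k - t) ids))
      (fscale (2 * cX * of_nat (k - t + 1)) (b t) + fscale (2 * cX * of_nat (t + 1)) (b (Suc t)))"
    by simp
  also have "k - t + 1 = k + 1 - t"
    using \<open>t \<le> k\<close> by simp
  finally show ?thesis
    by (simp only: fscale_add fscale_of_nat[symmetric] fscale_fscale)
qed

lemma adX_closed_form_odd:
  assumes ids: "set ids \<subseteq> {1..n}" and sym: "\<forall>i\<in>{1..n}. \<forall>j\<in>{1..n}. eta i j = eta j i"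
  shows "Weq n eta (adX n (adX_closed_form n eta ids k 1)) (adX_closed_form n eta ids (Suc k) 0)"
proof -
  let ?m = "int (length ids)"
  define b where "b t = bracket n eta t (?m - int (Suc k) - int t) 0 (Suc k - t) ids" for t
  have "adX n (adX_closed_form n eta ids k 1) = fscale ((-1) ^ k * fact k * cX)
      (\<Sum>t\<le>k. adX n (bracket n eta t (?m - int k - int t - 1) 1 (k - t) ids))"
    by (simp add: adX_closed_form_def adX_fscale adX_sum atLeast0AtMost)
  also have "Weq n eta \<dots> (fscale ((-1) ^ k * fact k * cX)
      (\<Sum>t\<le>k. fscale (2 * cX) (of_nat (k + 1 - t) * b t + of_nat (t + 1) * b (Suc t))))"
    using adX_bracket_odd_summand[OF ids sym] by (intro Weq_fscale Weq_sum) (simp add: b_def)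
  also have "\<dots> = fscale ((-1) ^ k * fact k * cX * (2 * cX))
      ((\<Sum>t\<le>k. of_nat (k + 1 - t) * b t) + (\<Sum>t\<le>k. of_nat (t + 1) * b (Suc t)))"
    by (simp only: fscale_sum[symmetric] sum.distrib fscale_fscale)
  also have "\<dots> = fscale ((-1) ^ k * fact k * cX * (2 * cX) * of_nat (k + 1)) (\<Sum>t\<le>Suc k. b t)"
    unfolding sum_telescoping_weights by (simp only: fscale_of_nat[symmetric] fscale_fscale)
  also have "\<dots> = adX_closed_form n eta ids (Suc k) 0"
  proof -
    have "(-1) ^ k * fact k * cX * (2 * cX) * of_nat (k + 1) = (-1) ^ k * fact k * of_nat (k + 1) * (2 * (cX * cX))"
      by (simp only: mult_ac)
    also have "\<dots> = ((-1) ^ Suc k * fact (Suc k) :: complex)"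
      by (simp add: cX_squared fact_Suc algebra_simps)
    finally have "(-1) ^ k * fact k * cX * (2 * cX) * of_nat (k + 1) = ((-1) ^ Suc k * fact (Suc k) :: complex)" .
    then show ?thesis
      by (simp add: adX_closed_form_def b_def atLeast0AtMost)
  qed
  finally show ?thesis .
qed

lemma adX_power_closed_form:
  assumes ids: "set ids \<subseteq> {1..n}" and sym: "\<forall>i\<in>{1..n}. \<forall>j\<in>{1..n}. eta i j = eta j i"
  shows "Weq n eta ((adX n ^^ (2 * k)) (mono (map GX ids))) (adX_closed_form n eta ids k 0)
       \<and> Weq n eta ((adX n ^^ (2 * k + 1)) (mono (map GX ids))) (adX_closed_form n eta ids k 1)"
proof (induction k)
  case 0
  have "Weq n eta (mono (map GX ids)) (adX_closed_form n eta ids 0 0)"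
    using Weq_sym[OF Weq_bracket_x_only[OF ids]] by (simp add: adX_closed_form_def)
  then show ?case
    using Weq_trans[OF Weq_adX adX_closed_form_even[OF ids]] by simp
next
  case (Suc k)
  have "Weq n eta ((adX n ^^ (2 * Suc k)) (mono (map GX ids))) (adX_closed_form n eta ids (Suc k) 0)"
    using Weq_trans[OF Weq_adX[OF Suc.IH[THEN conjunct2]] adX_closed_form_odd[OF ids sym]] by simp
  then show ?case
    using Weq_trans[OF Weq_adX adX_closed_form_even[OF ids]] by simp
qed

theorem lemma5p3:
  fixes n m k r :: nat and eta :: "nat \<Rightarrow> nat \<Rightarrow> complex" and ids :: "nat list"
  assumes "n \<ge> 1"
    and sym: "\<forall>i\<in>{1..n}. \<forall>j\<in>{1..n}. eta i j = eta j i"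
    and inv: "\<exists>\<theta> :: nat \<Rightarrow> nat \<Rightarrow> complex. \<forall>i\<in>{1..n}. \<forall>j\<in>{1..n}.
                (\<Sum>l\<in>{1..n}. eta i l * \<theta> l j) = (if i = j then 1 else 0)"
    and "m \<ge> 1" and "length ids = m" and "set ids \<subseteq> {1..n}"
    and "r \<in> {0, 1}"
  shows "Weq n eta ((adX n ^^ (2 * k + r)) (mono (map GX ids)))
           (fscale ((-1) ^ k * fact k * cX ^ r)
              (\<Sum>t\<in>{0..k}. bracket n eta t (int m - int k - int t - int r) r (k - t) ids))"
  using adX_power_closed_form[OF \<open>set ids \<subseteq> {1..n}\<close> sym, of k] \<open>r \<in> {0, 1}\<close> \<open>length ids = m\<close>
  by (auto simp: adX_closed_form_def)

end
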